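(* Fix integers $p\ge 3$, $q\ge 1$ and a real $\eta$ with $0<\eta<\frac{1}{7p^5q}$. For all sufficiently large $n$ the following holds for the graph $G$ described in the context: $G$ admits a vertex partition $V(G)=V_1\cup\cdots\cup V_p$ with $\sum_{i=1}^p e(V_i)\le \eta^3n^2$; moreover, for every vertex partition $V(G)=V_1\cup\cdots\cup V_p$ with $\sum_{i=1}^p e(V_i)\le \eta^3n^2$, we have $\big||V_i|-\frac{n}{p}\big|\le \eta n$ for each $i\in[p]$.
   Context: $B_{p,q}=K_p\nabla qK_1$ is the join of a clique $K_p$ and an independent set of $q$ vertices. $\mathcal{G}(n,p,q)$ is the set of $n$-vertex graphs with chromatic number greater than $p$ that contain no subgraph isomorphic to $B_{p,q}$ and have the maximum number of edges among all such graphs. $G$ is a graph in $\mathcal{G}(n,p,q)$ whose minimum degree $\delta(G)$ equals $\min_{F\in\mathcal{G}(n,p,q)}\delta(F)$. For $U\subseteq V(G)$, $e(U)$ is the number of edges of $G$ with both ends in $U$; $[p]=\{1,\dots,p\}$. *)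

theory Defs
  imports Complex_Main
begin

definition simple_graph :: "nat \<Rightarrow> nat set set \<Rightarrow> bool" where
  "simple_graph n E \<longleftrightarrow> E \<subseteq> {{u, v} | u v. u \<noteq> v \<and> u < n \<and> v < n}"

definition colorable :: "nat \<Rightarrow> nat set set \<Rightarrow> nat \<Rightarrow> bool" where
  "colorable n E k \<longleftrightarrow> (\<exists>c :: nat \<Rightarrow> nat. (\<forall>v<n. c v < k) \<and>
      (\<forall>u v. {u, v} \<in> E \<and> u \<noteq> v \<longrightarrow> c u \<noteq> c v))"

definition chromatic_number :: "nat \<Rightarrow> nat set set \<Rightarrow> nat" where
  "chromatic_number n E = (LEAST k. colorable n E k)"

definition contains_subgraph :: "nat \<Rightarrow> nat set set \<Rightarrow> nat \<Rightarrow> nat set set \<Rightarrow> bool" where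
  "contains_subgraph n E m H \<longleftrightarrow> (\<exists>f :: nat \<Rightarrow> nat. inj_on f {..<m} \<and> f ` {..<m} \<subseteq> {..<n} \<and>
      (\<forall>e\<in>H. f ` e \<in> E))"

text \<open>B_{p,q} = K_p join (q K_1), on vertex set {..<p+q}: vertices < p form the clique,
  vertices p..p+q-1 form the independent set.\<close>
definition B_graph :: "nat \<Rightarrow> nat \<Rightarrow> nat set set" where
  "B_graph p q = {{i, j} | i j. i \<noteq> j \<and> i < p \<and> j < p + q}"

definition admissible :: "nat \<Rightarrow> nat \<Rightarrow> nat \<Rightarrow> nat set set \<Rightarrow> bool" where
  "admissible n p q E \<longleftrightarrow> simple_graph n E \<and> chromatic_number n E > p \<and>
      \<not> contains_subgraph n E (p + q) (B_graph p q)"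

definition extremal_family :: "nat \<Rightarrow> nat \<Rightarrow> nat \<Rightarrow> nat set set set" where
  "extremal_family n p q = {E. admissible n p q E \<and>
      (\<forall>F. admissible n p q F \<longrightarrow> card F \<le> card E)}"

definition degree :: "nat set set \<Rightarrow> nat \<Rightarrow> nat" where
  "degree E v = card {u. {u, v} \<in> E}"

definition min_degree :: "nat \<Rightarrow> nat set set \<Rightarrow> nat" where
  "min_degree n E = Min (degree E ` {..<n})"

definition edges_in :: "nat set set \<Rightarrow> nat set \<Rightarrow> nat" where
  "edges_in E U = card {e \<in> E. e \<subseteq> U}"

text \<open>Vertex partition of {..<n} into parts V 1, ..., V p (parts may be empty).\<close>
definition vertex_partition :: "nat \<Rightarrow> nat \<Rightarrow> (nat \<Rightarrow> nat set) \<Rightarrow> bool" where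
  "vertex_partition n p V \<longleftrightarrow> (\<Union>i\<in>{1..p}. V i) = {..<n} \<and>
      (\<forall>i\<in>{1..p}. \<forall>j\<in>{1..p}. i \<noteq> j \<longrightarrow> V i \<inter> V j = {})"

end

(* An extremal graph has at least as many edges as a blow-up of C5 + K_(p-2) (join) that contains
   the complete p-partite graph on all but five vertices, so 2 e(G) >= (1 - 1/p) n^2 - O(n).
   Since G has no B_(p,q), every p-clique has fewer than q common neighbours, and Fueredi's
   argument (split off the non-neighbours of a vertex of maximum degree, recurse inside its
   neighbourhood) yields p parts with e(G) + sum e(V_i) <= (1 - 1/p) n^2 / 2 + O(q n); hence
   sum e(V_i) = O(q n) <= eta^3 n^2.  Conversely, for any p-partition,
   2 e(G) <= 2 sum e(V_i) + n^2 - sum |V_i|^2 and sum |V_i|^2 >= n^2/p + (|V_k| - n/p)^2, so a part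
   deviating by more than eta n from n/p would push e(G) below the lower bound. *)
theory Submission
  imports Defs "HOL-Library.Disjoint_Sets"
begin

section \<open>Counting adjacent pairs\<close>

definition nbrs_in :: "'a set set \<Rightarrow> 'a set \<Rightarrow> 'a \<Rightarrow> 'a set" where
  "nbrs_in G T u = {v\<in>T. {u, v} \<in> G}"

text \<open>Ordered pairs are counted, so \<open>adj_count G S S = 2 e(S)\<close>.\<close>
definition adj_count :: "'a set set \<Rightarrow> 'a set \<Rightarrow> 'a set \<Rightarrow> nat" where
  "adj_count G S T = (\<Sum>u\<in>S. card (nbrs_in G T u))"

definition clique :: "'a set set \<Rightarrow> 'a set \<Rightarrow> bool" where
  "clique G K \<longleftrightarrow> (\<forall>u\<in>K. \<forall>v\<in>K. u \<noteq> v \<longrightarrow> {u, v} \<in> G)"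

definition common_nbrs_in :: "'a set set \<Rightarrow> 'a set \<Rightarrow> 'a set \<Rightarrow> 'a set" where
  "common_nbrs_in G T K = {v\<in>T. \<forall>u\<in>K. {u, v} \<in> G}"

lemma simple_graph_edgeE:
  assumes "simple_graph n G" "e \<in> G"
  obtains u v where "e = {u, v}" "u \<noteq> v" "u < n" "v < n"
  using assms unfolding simple_graph_def by blast

lemma simple_graph_finite: "simple_graph n G \<Longrightarrow> finite G"
  unfolding simple_graph_def by (rule finite_subset[of _ "Pow {..<n}"]) auto

lemma simple_graph_loop_free: "simple_graph n G \<Longrightarrow> {u, u} \<notin> G"
  by (auto elim: simple_graph_edgeE simp: doubleton_eq_iff)

lemma edges_in_vertex_set:
  assumes "simple_graph n G"
  shows "edges_in G {..<n} = card G"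
proof -
  have "{e\<in>G. e \<subseteq> {..<n}} = G" using assms by (auto elim: simple_graph_edgeE)
  then show ?thesis by (simp add: edges_in_def)
qed

lemma adj_count_commute:
  assumes "finite S" "finite T"
  shows "adj_count G S T = adj_count G T S"
  unfolding adj_count_def nbrs_in_def
  by (rule sum_multicount_gen) (use assms in \<open>auto simp: insert_commute\<close>)

lemma adj_count_Un_left:
  assumes "finite S1" "finite S2" "S1 \<inter> S2 = {}"
  shows "adj_count G (S1 \<union> S2) T = adj_count G S1 T + adj_count G S2 T"
  using assms by (simp add: adj_count_def sum.union_disjoint)

lemma adj_count_Un_right:
  assumes "finite T1" "finite T2" "T1 \<inter> T2 = {}"
  shows "adj_count G S (T1 \<union> T2) = adj_count G S T1 + adj_count G S T2"
proof -
  have "card (nbrs_in G (T1 \<union> T2) u) = card (nbrs_in G T1 u) + card (nbrs_in G T2 u)" for u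
    using assms by (subst card_Un_disjoint[symmetric]) (auto simp: nbrs_in_def intro: arg_cong[where f = card])
  then show ?thesis by (simp add: adj_count_def sum.distrib)
qed

lemma adj_count_UN_left:
  assumes "finite I" "\<And>i. i \<in> I \<Longrightarrow> finite (V i)" "disjoint_family_on V I"
  shows "adj_count G (\<Union>i\<in>I. V i) T = (\<Sum>i\<in>I. adj_count G (V i) T)"
  unfolding adj_count_def using assms
  by (intro sum.UNION_disjoint) (auto simp: disjoint_family_on_def)

lemma adj_count_le:
  assumes "\<And>u. u \<in> S \<Longrightarrow> card (nbrs_in G T u) \<le> b"
  shows "adj_count G S T \<le> card S * b"
  unfolding adj_count_def using sum_bounded_above[of S _ b] assms by simp

lemma adj_count_le_card_mult:
  assumes "finite T"
  shows "adj_count G S T \<le> card S * card T"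
  by (rule adj_count_le) (use assms in \<open>auto simp: nbrs_in_def intro: card_mono\<close>)

lemma adj_count_self:
  assumes "simple_graph n G" "finite S"
  shows "adj_count G S S = 2 * edges_in G S"
proof -
  let ?E = "{e\<in>G. e \<subseteq> S}"
  have "finite G" using assms(1) by (rule simple_graph_finite)
  have "card (nbrs_in G S u) = card {e\<in>?E. u \<in> e}" if "u \<in> S" for u
  proof -
    have "{e\<in>?E. u \<in> e} = (\<lambda>v. {u, v}) ` nbrs_in G S u"
    proof
      show "{e\<in>?E. u \<in> e} \<subseteq> (\<lambda>v. {u, v}) ` nbrs_in G S u"
      proof
        fix e assume e: "e \<in> {e\<in>?E. u \<in> e}"
        then obtain a b where "e = {a, b}" using assms(1) by (blast elim: simple_graph_edgeE)
        with e show "e \<in> (\<lambda>v. {u, v}) ` nbrs_in G S u"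
          by (auto simp: nbrs_in_def insert_commute image_iff)
      qed
    qed (use that in \<open>auto simp: nbrs_in_def\<close>)
    moreover have "inj_on (\<lambda>v. {u, v}) (nbrs_in G S u)"
      by (auto simp: inj_on_def doubleton_eq_iff)
    ultimately show ?thesis by (simp add: card_image)
  qed
  moreover have "card {u\<in>S. u \<in> e} = 2" if "e \<in> ?E" for e
    using that assms(1) by (auto elim!: simple_graph_edgeE simp: Int_absorb1[symmetric] Collect_conj_eq)
  ultimately show ?thesis
    unfolding adj_count_def edges_in_def
    using sum_multicount[of S ?E "\<lambda>u e. u \<in> e" 2] assms(2) \<open>finite G\<close> by simp
qed

section \<open>Fueredi's partition\<close>

lemma adj_count_max_degree_split:
  assumes "finite D" "D' \<subseteq> D" and max_deg: "\<And>y. y \<in> D \<Longrightarrow> card (nbrs_in G D y) \<le> card D'"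
  shows "adj_count G D D + adj_count G (D - D') (D - D')
    \<le> adj_count G D' D' + 2 * (card (D - D') * card D')"
proof -
  define W where "W = D - D'"
  have fin: "finite W" "finite D'" and disj: "W \<inter> D' = {}" and D: "D = W \<union> D'"
    using assms(1,2) finite_subset unfolding W_def by auto
  have "adj_count G D D = adj_count G W D + adj_count G W D' + adj_count G D' D'"
    using adj_count_Un_left[OF fin disj, of G D] adj_count_Un_right[OF fin disj, of G D']
      adj_count_commute[OF fin(2,1), of G] unfolding D[symmetric] by simp
  moreover have "adj_count G W D = adj_count G W W + adj_count G W D'"
    using adj_count_Un_right[OF fin disj] unfolding D[symmetric] .
  moreover have "adj_count G W D \<le> card W * card D'"
    using max_deg unfolding W_def by (intro adj_count_le) auto
  ultimately show ?thesis unfolding W_def[symmetric] by linarith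
qed

lemma common_nbrs_in_nbrs_in_le:
  assumes loopless: "\<And>u. {u, u} \<notin> G" and "finite D" "x \<in> D"
    and bound: "\<And>K. K \<subseteq> D \<Longrightarrow> clique G K \<Longrightarrow> card K = Suc k \<Longrightarrow> card (common_nbrs_in G D K) \<le> s"
    and K: "K \<subseteq> nbrs_in G D x" "clique G K" "card K = k"
  shows "card (common_nbrs_in G (nbrs_in G D x) K) \<le> s"
proof -
  have "K \<subseteq> D" using K(1) by (auto simp: nbrs_in_def)
  then have "finite K" using assms(2) by (rule finite_subset)
  have "x \<notin> K" using K(1) loopless by (auto simp: nbrs_in_def)
  have "clique G (insert x K)"
    using K(1,2) unfolding clique_def nbrs_in_def by (auto simp: insert_commute)
  moreover have "card (insert x K) = Suc k" using \<open>finite K\<close> \<open>x \<notin> K\<close> K(3) by simp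
  ultimately have "card (common_nbrs_in G D (insert x K)) \<le> s"
    using \<open>K \<subseteq> D\<close> assms(3) by (intro bound) auto
  moreover have "common_nbrs_in G (nbrs_in G D x) K \<subseteq> common_nbrs_in G D (insert x K)"
    by (auto simp: common_nbrs_in_def nbrs_in_def)
  moreover have "finite (common_nbrs_in G D (insert x K))"
    using assms(2) by (simp add: common_nbrs_in_def)
  ultimately show ?thesis by (meson card_mono le_trans)
qed

definition partition_into :: "'a set \<Rightarrow> nat \<Rightarrow> (nat \<Rightarrow> 'a set) \<Rightarrow> bool" where
  "partition_into D k V \<longleftrightarrow> (\<Union>i\<in>{1..k}. V i) = D \<and> disjoint_family_on V {1..k}"

lemma partition_into_fun_upd:
  assumes "partition_into D k V" "W \<inter> D = {}"
  shows "partition_into (W \<union> D) (Suc k) (V(Suc k := W))"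
proof -
  have I: "{1..Suc k} = insert (Suc k) {1..k}" by auto
  show ?thesis
    using assms unfolding partition_into_def I disjoint_family_on_def by fastforce
qed

text \<open>After multiplication by \<open>k\<close> the difference of the two sides is at least
  \<open>(k a - b)\<^sup>2 + 2 k (k + 1) s a \<ge> 0\<close>; this absorbs the cross term \<open>2 a b\<close>.\<close>
lemma furedi_step_inequality:
  fixes k a b s X Y :: real
  assumes "k \<ge> 1" "a \<ge> 0" "b \<ge> 0" "s \<ge> 0"
    and "k * X \<le> (k - 1) * b\<^sup>2 + 2 * k * s * b" "Y \<le> X + 2 * a * b"
  shows "(k + 1) * Y \<le> k * (a + b)\<^sup>2 + 2 * (k + 1) * s * (a + b)"
proof -
  have "k * ((k + 1) * Y) \<le> (k + 1) * (k * X) + 2 * k * (k + 1) * a * b"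
    using assms(1,6) mult_left_mono[of Y "X + 2 * a * b" "k * (k + 1)"] by (simp add: algebra_simps)
  also have "\<dots> \<le> (k + 1) * ((k - 1) * b\<^sup>2 + 2 * k * s * b) + 2 * k * (k + 1) * a * b"
    using assms(1,5) by (simp add: mult_left_mono)
  also have "\<dots> = k * (k * (a + b)\<^sup>2 + 2 * (k + 1) * s * (a + b)) - (k * a - b)\<^sup>2 - 2 * k * (k + 1) * s * a"
    by (simp add: algebra_simps power2_eq_square)
  also have "\<dots> \<le> k * (k * (a + b)\<^sup>2 + 2 * (k + 1) * s * (a + b))"
  proof -
    have "0 \<le> 2 * k * (k + 1) * s * a" using assms(1-4) by simp
    then show ?thesis using zero_le_power2[of "k * a - b"] by linarith
  qed
  finally show ?thesis using assms(1) by simp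
qed

lemma furedi_partition_extend:
  fixes G :: "'a set set"
  assumes "finite D" "D' \<subseteq> D" "\<And>y. y \<in> D \<Longrightarrow> card (nbrs_in G D y) \<le> card D'" "1 \<le> k"
    and V: "partition_into D' k V"
    and bound: "real k * real (adj_count G D' D' + (\<Sum>i\<in>{1..k}. adj_count G (V i) (V i)))
      \<le> (real k - 1) * real (card D') ^ 2 + 2 * real k * real s * real (card D')"
  defines "V' \<equiv> V(Suc k := D - D')"
  shows "partition_into D (Suc k) V'"
    and "real (Suc k) * real (adj_count G D D + (\<Sum>i\<in>{1..Suc k}. adj_count G (V' i) (V' i)))
      \<le> (real (Suc k) - 1) * real (card D) ^ 2 + 2 * real (Suc k) * real s * real (card D)"
proof -
  define W where "W = D - D'"
  have fin: "finite W" "finite D'" and disj: "W \<inter> D' = {}" and D: "D = W \<union> D'"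
    using assms(1,2) finite_subset unfolding W_def by auto
  show "partition_into D (Suc k) V'"
    using partition_into_fun_upd[OF V disj] unfolding V'_def W_def[symmetric] D[symmetric] .
  have "(\<Sum>i\<in>{1..k}. adj_count G (V' i) (V' i)) = (\<Sum>i\<in>{1..k}. adj_count G (V i) (V i))"
    unfolding V'_def by (intro sum.cong) auto
  then have "(\<Sum>i\<in>{1..Suc k}. adj_count G (V' i) (V' i))
      = (\<Sum>i\<in>{1..k}. adj_count G (V i) (V i)) + adj_count G W W"
    unfolding V'_def W_def by simp
  then have "adj_count G D D + (\<Sum>i\<in>{1..Suc k}. adj_count G (V' i) (V' i))
      \<le> adj_count G D' D' + (\<Sum>i\<in>{1..k}. adj_count G (V i) (V i)) + 2 * (card W * card D')"
    using adj_count_max_degree_split[OF assms(1-3)] unfolding W_def by linarith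
  then have "real (adj_count G D D + (\<Sum>i\<in>{1..Suc k}. adj_count G (V' i) (V' i)))
      \<le> real (adj_count G D' D' + (\<Sum>i\<in>{1..k}. adj_count G (V i) (V i)))
        + 2 * real (card W) * real (card D')"
    using of_nat_mono[where 'a = real] by fastforce
  from furedi_step_inequality[OF _ _ _ _ bound this] assms(4)
  have "(real k + 1) * real (adj_count G D D + (\<Sum>i\<in>{1..Suc k}. adj_count G (V' i) (V' i)))
      \<le> real k * (real (card W) + real (card D')) ^ 2
        + 2 * (real k + 1) * real s * (real (card W) + real (card D'))"
    by simp
  moreover have "card D = card W + card D'"
    using card_Un_disjoint[OF fin disj] D by simp
  ultimately show "real (Suc k) * real (adj_count G D D + (\<Sum>i\<in>{1..Suc k}. adj_count G (V' i) (V' i)))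
      \<le> (real (Suc k) - 1) * real (card D) ^ 2 + 2 * real (Suc k) * real s * real (card D)"
    by (simp add: add.commute)
qed

lemma furedi_partition:
  fixes G :: "'a set set"
  assumes loopless: "\<And>u. {u, u} \<notin> G" and "1 \<le> k" "finite D"
    and "\<And>K. K \<subseteq> D \<Longrightarrow> clique G K \<Longrightarrow> card K = k \<Longrightarrow> card (common_nbrs_in G D K) \<le> s"
  shows "\<exists>V. partition_into D k V \<and>
    real k * real (adj_count G D D + (\<Sum>i\<in>{1..k}. adj_count G (V i) (V i)))
      \<le> (real k - 1) * real (card D) ^ 2 + 2 * real k * real s * real (card D)"
  using assms(2-)
proof (induction k arbitrary: D rule: nat_induct_at_least)
  case base
  have "card (nbrs_in G D u) \<le> s" if "u \<in> D" for u
  proof -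
    have "nbrs_in G D u = common_nbrs_in G D {u}"
      by (auto simp: nbrs_in_def common_nbrs_in_def)
    then show ?thesis using base.prems(2)[of "{u}"] that by (simp add: clique_def)
  qed
  then have "adj_count G D D \<le> card D * s" by (rule adj_count_le)
  then have "real (adj_count G D D) \<le> real s * real (card D)"
    by (metis mult.commute of_nat_le_iff of_nat_mult)
  then show ?case
    by (intro exI[of _ "\<lambda>_. D"]) (simp add: partition_into_def disjoint_family_on_def)
next
  case (Suc k)
  show ?case
  proof (cases "D = {}")
    case True
    then show ?thesis
      by (intro exI[of _ "\<lambda>_. {}"]) (simp add: partition_into_def adj_count_def disjoint_family_on_def)
  next
    case False
    let ?deg = "\<lambda>y. card (nbrs_in G D y)"
    obtain x where "x \<in> D" and x_max: "Max (?deg ` D) = ?deg x"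
      using obtains_MAX[OF Suc.prems(1) False] .
    have max_deg: "?deg y \<le> ?deg x" if "y \<in> D" for y
      unfolding x_max[symmetric] using Suc.prems(1) that by (intro Max_ge) auto
    have "finite (nbrs_in G D x)" using Suc.prems(1) by (simp add: nbrs_in_def)
    then have "\<exists>V. partition_into (nbrs_in G D x) k V \<and>
        real k * real (adj_count G (nbrs_in G D x) (nbrs_in G D x) + (\<Sum>i\<in>{1..k}. adj_count G (V i) (V i)))
          \<le> (real k - 1) * real (card (nbrs_in G D x)) ^ 2
            + 2 * real k * real s * real (card (nbrs_in G D x))"
      by (rule Suc.IH[OF _ common_nbrs_in_nbrs_in_le[OF loopless Suc.prems(1) \<open>x \<in> D\<close> Suc.prems(2)]])
    moreover have "nbrs_in G D x \<subseteq> D" by (auto simp: nbrs_in_def)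
    ultimately show ?thesis
      using furedi_partition_extend[OF Suc.prems(1) _ max_deg Suc.hyps] by blast
  qed
qed

lemma not_colorable_less_chromatic_number:
  assumes "\<not> colorable n E k"
  shows "k < chromatic_number n E"
proof (rule ccontr)
  have "colorable n E n" unfolding colorable_def by (rule exI[of _ id]) auto
  then have "colorable n E (chromatic_number n E)"
    unfolding chromatic_number_def by (rule LeastI)
  moreover assume "\<not> k < chromatic_number n E"
  ultimately have "colorable n E k"
    unfolding colorable_def by (meson not_less order_less_le_trans)
  with assms show False ..
qed

lemma B_graph_subgraph_clique:
  assumes "contains_subgraph n G (p + q) (B_graph p q)" "1 \<le> q"
  obtains K where "clique G K" "card K = Suc p" "K \<subseteq> {..<n}"
proof -
  obtain f where f: "inj_on f {..<p + q}" "f ` {..<p + q} \<subseteq> {..<n}" "\<forall>e\<in>B_graph p q. f ` e \<in> G"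
    using assms(1) unfolding contains_subgraph_def by blast
  have sub: "{..p} \<subseteq> {..<p + q}" using assms(2) by auto
  show ?thesis
  proof (rule that[of "f ` {..p}"])
    show "card (f ` {..p}) = Suc p"
      using card_image[OF inj_on_subset[OF f(1) sub]] by simp
    show "f ` {..p} \<subseteq> {..<n}" using f(2) sub by blast
    show "clique G (f ` {..p})"
      unfolding clique_def
    proof (intro ballI impI)
      fix u v assume "u \<in> f ` {..p}" "v \<in> f ` {..p}" "u \<noteq> v"
      then obtain i j where ij: "i \<le> p" "j \<le> p" "i \<noteq> j" "u = f i" "v = f j" by auto
      have "{min i j, max i j} \<in> B_graph p q"
        using ij assms(2) unfolding B_graph_def by (intro CollectI exI[of _ "min i j"] exI[of _ "max i j"]) auto
      moreover have "{min i j, max i j} = {i, j}" by (auto simp: min_def max_def)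
      ultimately show "{u, v} \<in> G" using f(3) ij(4,5) by force
    qed
  qed
qed

lemma clique_common_nbrs_contains_B_graph:
  assumes K: "K \<subseteq> {..<n}" "clique G K" "card K = p"
    and C: "C \<subseteq> common_nbrs_in G {..<n} K" "card C = q" "K \<inter> C = {}"
  shows "contains_subgraph n G (p + q) (B_graph p q)"
proof -
  have "finite K" "finite C"
    using K(1) C(1) by (auto simp: common_nbrs_in_def intro: finite_subset)
  then obtain xs ys where xs: "set xs = K" "distinct xs" and ys: "set ys = C" "distinct ys"
    by (meson finite_distinct_list)
  have len: "length xs = p" "length ys = q"
    using xs ys K(3) C(2) distinct_card by fastforce+
  define f where "f = (!) (xs @ ys)"
  have f_K: "f i \<in> K" if "i < p" for i
    using that len unfolding f_def xs(1)[symmetric] by (simp add: nth_append)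
  have f_C: "f j \<in> C" if "p \<le> j" "j < p + q" for j
    using that len unfolding f_def ys(1)[symmetric] by (simp add: nth_append)
  have inj: "inj_on f {..<p + q}"
    unfolding f_def using xs ys C(3) len by (intro inj_on_nth) auto
  show ?thesis
    unfolding contains_subgraph_def
  proof (intro exI[of _ f] conjI ballI inj)
    show "f ` {..<p + q} \<subseteq> {..<n}"
    proof
      fix y assume "y \<in> f ` {..<p + q}"
      then obtain i where "i < p + q" "y = f i" by auto
      then have "y \<in> K \<union> C" using f_K f_C by (cases "i < p") auto
      then show "y \<in> {..<n}" using K(1) C(1) by (auto simp: common_nbrs_in_def)
    qed
    fix e assume "e \<in> B_graph p q"
    then obtain i j where e: "e = {i, j}" "i \<noteq> j" "i < p" "j < p + q"
      unfolding B_graph_def by blast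
    show "f ` e \<in> G"
    proof (cases "j < p")
      case True
      then have "f i \<noteq> f j" using e inj by (auto dest: inj_onD)
      then show ?thesis using K(2) f_K e True by (simp add: clique_def)
    next
      case False
      then have "f j \<in> C" using e(4) f_C by simp
      then have "{f i, f j} \<in> G"
        using C(1) f_K[OF e(3)] unfolding common_nbrs_in_def by blast
      then show ?thesis using e(1) by simp
    qed
  qed
qed

lemma B_free_common_nbrs_less:
  assumes G: "simple_graph n G" "\<not> contains_subgraph n G (p + q) (B_graph p q)"
    and K: "K \<subseteq> {..<n}" "clique G K" "card K = p"
  shows "card (common_nbrs_in G {..<n} K) < q"
proof (rule ccontr)
  assume "\<not> card (common_nbrs_in G {..<n} K) < q"
  then obtain C where C: "C \<subseteq> common_nbrs_in G {..<n} K" "card C = q"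
    by (meson not_less obtain_subset_with_card_n)
  moreover have "K \<inter> C = {}"
    using C(1) simple_graph_loop_free[OF G(1)] unfolding common_nbrs_in_def by blast
  ultimately have "contains_subgraph n G (p + q) (B_graph p q)"
    by (rule clique_common_nbrs_contains_B_graph[OF K])
  with G(2) show False ..
qed

section \<open>A blow-up of the 5-cycle joined to a clique\<close>

definition c5_adj :: "nat \<Rightarrow> nat \<Rightarrow> bool" where
  "c5_adj a b \<longleftrightarrow> a < 5 \<and> b < 5 \<and> (a + 1 = b \<or> b + 1 = a \<or> {a, b} = {0, 4})"

text \<open>Adjacency of \<open>C\<^sub>5 \<or> K\<^sub>p\<^sub>-\<^sub>2\<close> on the labels \<open>0..4\<close> (the cycle) and \<open>5, 6, \<dots>\<close> (the clique).\<close>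
definition label_adj :: "nat \<Rightarrow> nat \<Rightarrow> bool" where
  "label_adj a b \<longleftrightarrow> a \<noteq> b \<and> (5 \<le> a \<or> 5 \<le> b \<or> c5_adj a b)"

text \<open>Vertices \<open>0..4\<close> carry the cycle; every other vertex \<open>v\<close> is put into class \<open>v mod p\<close>,
  and classes \<open>0\<close> and \<open>1\<close> are merged with the cycle vertices \<open>0\<close> and \<open>1\<close>.  The resulting
  blow-up of \<open>C\<^sub>5 \<or> K\<^sub>p\<^sub>-\<^sub>2\<close> contains the complete \<open>p\<close>-partite graph on \<open>{5..<n}\<close>.\<close>
definition label :: "nat \<Rightarrow> nat \<Rightarrow> nat" where
  "label p v = (if v < 5 then v else if v mod p < 2 then v mod p else v mod p + 3)"

definition planted_c5_graph :: "nat \<Rightarrow> nat \<Rightarrow> nat set set" where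
  "planted_c5_graph n p =
    {{u, v} | u v. u \<noteq> v \<and> u < n \<and> v < n \<and> label_adj (label p u) (label p v)}"

lemma doubleton_mem_Collect_iff:
  assumes "\<And>a b. P a b \<Longrightarrow> P b a"
  shows "{u, v} \<in> {{a, b} | a b. P a b} \<longleftrightarrow> P u v"
  using assms by (auto simp: doubleton_eq_iff)

lemma planted_c5_graph_edge_iff:
  "{u, v} \<in> planted_c5_graph n p \<longleftrightarrow> u \<noteq> v \<and> u < n \<and> v < n \<and> label_adj (label p u) (label p v)"
  unfolding planted_c5_graph_def
  by (rule doubleton_mem_Collect_iff) (auto simp: label_adj_def c5_adj_def insert_commute)

lemma simple_graph_planted_c5_graph: "simple_graph n (planted_c5_graph n p)"
  unfolding simple_graph_def planted_c5_graph_def by blast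

lemma label_cycle_vertex: "v < 5 \<Longrightarrow> label p v = v"
  by (simp add: label_def)

lemma label_clique_vertex:
  assumes "v \<in> {p + 2..<2 * p}"
  shows "label p v = v - p + 3"
proof -
  have "v - p < p" using assms by auto
  then have "v mod p = v - p" using assms by (simp add: le_mod_geq)
  then show ?thesis using assms unfolding label_def by auto
qed

lemma c5_adj_triangle_free:
  assumes "c5_adj a b" "c5_adj b c" "c5_adj a c"
  shows False
  using assms unfolding c5_adj_def by (auto simp: doubleton_eq_iff)

lemma c5_not_two_colourable:
  assumes "\<And>v. v < 5 \<Longrightarrow> c v \<in> {a, b}" "\<And>u v. c5_adj u v \<Longrightarrow> c u \<noteq> c v"
  shows False
  using assms(1)[of 0] assms(1)[of 1] assms(1)[of 2] assms(1)[of 3] assms(1)[of 4]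
    assms(2)[of 0 1] assms(2)[of 1 2] assms(2)[of 2 3] assms(2)[of 3 4] assms(2)[of 0 4]
  by (auto simp: c5_adj_def)

lemma card_clique_planted_c5_graph:
  assumes "p \<ge> 3" "clique (planted_c5_graph n p) K" "finite K"
  shows "card K \<le> p"
proof (rule ccontr)
  assume "\<not> card K \<le> p"
  have adj: "label_adj (label p u) (label p v)" if "u \<in> K" "v \<in> K" "u \<noteq> v" for u v
    using assms(2) that unfolding clique_def planted_c5_graph_edge_iff by blast
  then have "inj_on (label p) K" by (auto simp: inj_on_def label_adj_def)
  then have "card (label p ` K) > p" using \<open>\<not> card K \<le> p\<close> by (simp add: card_image)
  moreover have labels: "label p ` K \<subseteq> (label p ` K \<inter> {..<5}) \<union> {5..<p + 3}"
    using assms(1) by (auto simp: label_def)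
  have "card (label p ` K) \<le> card (label p ` K \<inter> {..<5}) + (p - 2)"
    using card_mono[OF _ labels] card_Un_le[of "label p ` K \<inter> {..<5}" "{5..<p + 3}"] by simp
  ultimately have "3 \<le> card (label p ` K \<inter> {..<5})" using assms(1) by linarith
  then obtain T where T: "T \<subseteq> label p ` K \<inter> {..<5}" "card T = 3"
    by (rule obtain_subset_with_card_n)
  then obtain a b c where "T = {a, b, c}" "a \<noteq> b" "b \<noteq> c" "a \<noteq> c" by (meson card_3_iff)
  then have "label_adj a b" "label_adj b c" "label_adj a c" "a < 5" "b < 5" "c < 5"
    using T(1) adj by auto
  then show False by (auto simp: label_adj_def intro: c5_adj_triangle_free)
qed

lemma planted_c5_graph_B_free:
  assumes "p \<ge> 3" "q \<ge> 1"
  shows "\<not> contains_subgraph n (planted_c5_graph n p) (p + q) (B_graph p q)"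
proof
  assume "contains_subgraph n (planted_c5_graph n p) (p + q) (B_graph p q)"
  then obtain K where "clique (planted_c5_graph n p) K" "card K = Suc p" "K \<subseteq> {..<n}"
    using assms(2) by (rule B_graph_subgraph_clique)
  then show False
    using card_clique_planted_c5_graph[OF assms(1)] finite_subset[of K "{..<n}"] by fastforce
qed

text \<open>The vertices \<open>{p + 2..<2 p}\<close> form a \<open>K\<^sub>p\<^sub>-\<^sub>2\<close> joined to the 5-cycle \<open>0..4\<close>: they use up
  \<open>p - 2\<close> colours, leaving two colours for an odd cycle.\<close>
lemma planted_c5_graph_not_colorable:
  assumes "p \<ge> 3" "2 * p \<le> n"
  shows "\<not> colorable n (planted_c5_graph n p) p"
proof
  assume "colorable n (planted_c5_graph n p) p"
  then obtain c where c: "\<And>v. v < n \<Longrightarrow> c v < p"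
    and proper: "\<And>u v. {u, v} \<in> planted_c5_graph n p \<Longrightarrow> u \<noteq> v \<Longrightarrow> c u \<noteq> c v"
    unfolding colorable_def by blast
  have c_ne: "c u \<noteq> c v" if "u < n" "v < n" "u \<noteq> v" "label_adj (label p u) (label p v)" for u v
    using proper that by (simp add: planted_c5_graph_edge_iff)
  define K where "K = {p + 2..<2 * p}"
  have "inj_on c K"
  proof (rule inj_onI, rule ccontr)
    fix u v assume "u \<in> K" "v \<in> K" "c u = c v" "u \<noteq> v"
    moreover have "label_adj (label p u) (label p v)"
      using \<open>u \<in> K\<close> \<open>v \<in> K\<close> \<open>u \<noteq> v\<close> by (auto simp: K_def label_clique_vertex label_adj_def)
    ultimately show False using c_ne[of u v] assms(2) by (auto simp: K_def)
  qed
  then have "card (c ` K) = p - 2" by (simp add: card_image K_def)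
  moreover have "c ` K \<subseteq> {..<p}" using c assms(2) by (auto simp: K_def)
  ultimately have "card ({..<p} - c ` K) = 2" using assms(1) by (simp add: card_Diff_subset finite_subset)
  then obtain a b where ab: "{..<p} - c ` K = {a, b}" by (meson card_2_iff)
  have two_colours: "c v \<in> {a, b}" if "v < 5" for v
  proof -
    have "c v \<noteq> c w" if "w \<in> K" for w
    proof -
      have "5 \<le> label p w" using that by (auto simp: K_def label_clique_vertex)
      then have "label_adj (label p v) (label p w)"
        using \<open>v < 5\<close> by (auto simp: label_adj_def label_cycle_vertex)
      then show ?thesis using c_ne[of v w] \<open>v < 5\<close> that assms by (auto simp: K_def)
    qed
    then show ?thesis using ab c[of v] \<open>v < 5\<close> assms by auto
  qed
  have "c u \<noteq> c v" if "c5_adj u v" for u v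
    using that c_ne[of u v] assms unfolding label_adj_def
    by (auto simp: label_cycle_vertex c5_adj_def doubleton_eq_iff)
  with two_colours show False by (rule c5_not_two_colourable)
qed

lemma planted_c5_graph_admissible:
  assumes "p \<ge> 3" "q \<ge> 1" "2 * p \<le> n"
  shows "admissible n p q (planted_c5_graph n p)"
  unfolding admissible_def
  using simple_graph_planted_c5_graph planted_c5_graph_B_free[OF assms(1,2)]
    not_colorable_less_chromatic_number[OF planted_c5_graph_not_colorable[OF assms(1,3)]]
  by blast

lemma card_residue_class_le:
  assumes "p > 0"
  shows "card {v\<in>{..<n}. v mod p = r} \<le> n div p + 1"
proof -
  have "inj_on (\<lambda>v. v div p) {v\<in>{..<n}. v mod p = r}"
    by (rule inj_onI) (metis (mono_tags) div_mult_mod_eq mem_Collect_eq)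
  moreover have "(\<lambda>v. v div p) ` {v\<in>{..<n}. v mod p = r} \<subseteq> {..n div p}"
    by (auto intro!: div_le_mono)
  ultimately have "card {v\<in>{..<n}. v mod p = r} \<le> card {..n div p}"
    by (intro card_inj_on_le) auto
  then show ?thesis by simp
qed

lemma planted_c5_graph_residue_edge:
  assumes "5 \<le> u" "5 \<le> v" "u < n" "v < n" "u mod p \<noteq> v mod p"
  shows "{u, v} \<in> planted_c5_graph n p"
proof -
  have labels: "label p u = (if u mod p < 2 then u mod p else u mod p + 3)"
    "label p v = (if v mod p < 2 then v mod p else v mod p + 3)"
    using assms(1,2) by (simp_all add: label_def)
  have "label_adj (label p u) (label p v)"
  proof (cases "u mod p < 2 \<and> v mod p < 2")
    case True
    then have "{label p u, label p v} = {0, 1}"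
      using assms(5) unfolding labels by auto
    then show ?thesis by (auto simp: label_adj_def c5_adj_def doubleton_eq_iff)
  next
    case False
    then show ?thesis using assms(5) unfolding labels label_adj_def by auto
  qed
  moreover have "u \<noteq> v" using assms(5) by blast
  ultimately show ?thesis using assms(3,4) by (simp add: planted_c5_graph_edge_iff)
qed

lemma card_planted_c5_graph_ge:
  assumes "p \<ge> 3" "5 \<le> n"
  shows "(1 - 1 / real p) * real n ^ 2 - 11 * real n \<le> 2 * real (card (planted_c5_graph n p))"
proof -
  let ?G = "planted_c5_graph n p"
  let ?U = "{5..<n}"
  let ?other = "\<lambda>u. {v\<in>?U. v mod p \<noteq> u mod p}"
  have other_deg: "real n - 6 - real n / real p \<le> real (card (?other u))" for u
  proof -
    have "card ?U \<le> card (?other u \<union> {v\<in>{..<n}. v mod p = u mod p})"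
      by (rule card_mono) auto
    also have "\<dots> \<le> card (?other u) + card {v\<in>{..<n}. v mod p = u mod p}"
      by (rule card_Un_le)
    finally have "card ?U \<le> card (?other u) + card {v\<in>{..<n}. v mod p = u mod p}" .
    moreover have "card {v\<in>{..<n}. v mod p = u mod p} \<le> n div p + 1"
      using assms(1) by (intro card_residue_class_le) simp
    moreover have "real (n div p) \<le> real n / real p" by (rule of_nat_div_le_of_nat)
    ultimately show ?thesis using assms(2) by simp
  qed
  have "(\<Sum>u\<in>?U. card (?other u)) \<le> (\<Sum>u\<in>?U. card (nbrs_in ?G {..<n} u))"
    by (intro sum_mono card_mono) (auto simp: nbrs_in_def intro: planted_c5_graph_residue_edge)
  also have "\<dots> \<le> adj_count ?G {..<n} {..<n}"
    unfolding adj_count_def by (intro sum_mono2) auto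
  also have "\<dots> = 2 * card ?G"
    using adj_count_self[OF simple_graph_planted_c5_graph]
      edges_in_vertex_set[OF simple_graph_planted_c5_graph] by simp
  finally have sum_other: "(\<Sum>u\<in>?U. card (?other u)) \<le> 2 * card ?G" .
  have "real (n - 5) * (real n - 6 - real n / real p) \<le> (\<Sum>u\<in>?U. real (card (?other u)))"
    using sum_mono[of ?U "\<lambda>_. real n - 6 - real n / real p", OF other_deg] by simp
  also have "\<dots> \<le> 2 * real (card ?G)"
    using of_nat_mono[OF sum_other, where 'a = real] by simp
  finally have "real (n - 5) * (real n - 6 - real n / real p) \<le> 2 * real (card ?G)" .
  moreover have "(1 - 1 / real p) * real n ^ 2 - 11 * real n \<le> real (n - 5) * (real n - 6 - real n / real p)"
    using assms by (simp add: of_nat_diff algebra_simps power2_eq_square)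
  ultimately show ?thesis by linarith
qed

section \<open>Edges inside the parts of a partition\<close>

lemma vertex_partition_iff: "vertex_partition n p V \<longleftrightarrow> partition_into {..<n} p V"
  unfolding vertex_partition_def partition_into_def disjoint_family_on_def by blast

lemma vertex_partition_finite:
  "vertex_partition n p V \<Longrightarrow> i \<in> {1..p} \<Longrightarrow> finite (V i)"
  unfolding vertex_partition_def by (metis UN_upper finite_lessThan finite_subset)

lemma vertex_partition_sum_card:
  assumes "vertex_partition n p V"
  shows "(\<Sum>i\<in>{1..p}. card (V i)) = n"
  using card_UN_disjoint[of "{1..p}" V] vertex_partition_finite[OF assms] assms
  unfolding vertex_partition_def by simp

lemma card_edges_le_partition:
  assumes G: "simple_graph n G" and V: "vertex_partition n p V"
  shows "2 * real (card G) \<le> 2 * real (\<Sum>i\<in>{1..p}. edges_in G (V i)) + real n ^ 2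
    - (\<Sum>i\<in>{1..p}. real (card (V i)) ^ 2)"
proof -
  let ?D = "{..<n}"
  have sub: "V i \<subseteq> ?D" and fin: "finite (V i)" if "i \<in> {1..p}" for i
    using V that vertex_partition_finite by (auto simp: vertex_partition_def)
  have part: "adj_count G (V i) ?D \<le> 2 * edges_in G (V i) + card (V i) * (n - card (V i))"
    if "i \<in> {1..p}" for i
  proof -
    have "adj_count G (V i) ?D = adj_count G (V i) (V i) + adj_count G (V i) (?D - V i)"
      using adj_count_Un_right[OF fin[OF that], of "?D - V i" G "V i"] sub[OF that]
      by (simp add: Un_absorb1)
    moreover have "adj_count G (V i) (?D - V i) \<le> card (V i) * (n - card (V i))"
      using adj_count_le_card_mult[of "?D - V i" G "V i"] sub[OF that] fin[OF that]
      by (simp add: card_Diff_subset)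
    ultimately show ?thesis using adj_count_self[OF G fin[OF that]] by linarith
  qed
  have "2 * real (card G) = real (adj_count G ?D ?D)"
    using adj_count_self[OF G] edges_in_vertex_set[OF G] by simp
  also have "\<dots> = real (\<Sum>i\<in>{1..p}. adj_count G (V i) ?D)"
    using adj_count_UN_left[of "{1..p}" V G ?D] fin V by (simp add: vertex_partition_iff partition_into_def)
  also have "\<dots> \<le> real (\<Sum>i\<in>{1..p}. 2 * edges_in G (V i) + card (V i) * (n - card (V i)))"
    using part by (intro of_nat_mono sum_mono)
  also have "\<dots> = (\<Sum>i\<in>{1..p}. 2 * real (edges_in G (V i))
      + real (card (V i)) * (real n - real (card (V i))))"
    unfolding of_nat_sum
    by (intro sum.cong refl) (use sub card_mono[of ?D] in \<open>auto simp: of_nat_diff\<close>)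
  also have "\<dots> = 2 * real (\<Sum>i\<in>{1..p}. edges_in G (V i)) + real n * (\<Sum>i\<in>{1..p}. real (card (V i)))
      - (\<Sum>i\<in>{1..p}. real (card (V i)) ^ 2)"
    by (simp add: sum.distrib sum_subtractf sum_distrib_left algebra_simps power2_eq_square)
  finally show ?thesis
    using vertex_partition_sum_card[OF V] by (simp add: power2_eq_square flip: of_nat_sum)
qed

lemma sum_squares_ge_deviation:
  fixes a :: "'i \<Rightarrow> real"
  assumes "finite I" "k \<in> I"
  shows "(\<Sum>i\<in>I. a i) ^ 2 / card I + (a k - (\<Sum>i\<in>I. a i) / card I) ^ 2 \<le> (\<Sum>i\<in>I. a i ^ 2)"
proof -
  define c where "c = (\<Sum>i\<in>I. a i) / card I"
  have "card I > 0" using assms card_gt_0_iff by blast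
  have "(a k - c) ^ 2 \<le> (\<Sum>i\<in>I. (a i - c) ^ 2)"
    by (rule member_le_sum) (use assms in auto)
  also have "\<dots> = (\<Sum>i\<in>I. a i ^ 2) - 2 * c * (\<Sum>i\<in>I. a i) + card I * c ^ 2"
    by (simp add: power2_diff sum.distrib sum_subtractf
        flip: sum_distrib_left sum_distrib_right)
  also have "\<dots> = (\<Sum>i\<in>I. a i ^ 2) - (\<Sum>i\<in>I. a i) ^ 2 / card I"
    using \<open>card I > 0\<close> by (simp add: c_def field_simps power2_eq_square)
  finally show ?thesis unfolding c_def by linarith
qed

lemma extremal_card_ge:
  assumes "G \<in> extremal_family n p q" "p \<ge> 3" "q \<ge> 1" "2 * p \<le> n"
  shows "(1 - 1 / real p) * real n ^ 2 - 11 * real n \<le> 2 * real (card G)"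
proof -
  have "card (planted_c5_graph n p) \<le> card G"
    using assms planted_c5_graph_admissible unfolding extremal_family_def by blast
  then show ?thesis using card_planted_c5_graph_ge[of p n] assms(2,4) by simp
qed

lemma extremal_sparse_partition:
  assumes "G \<in> extremal_family n p q" "p \<ge> 3" "q \<ge> 1" "2 * p \<le> n"
  shows "\<exists>V. vertex_partition n p V \<and> real (\<Sum>i\<in>{1..p}. edges_in G (V i)) \<le> (real q + 5) * real n"
proof -
  have G: "simple_graph n G" "\<not> contains_subgraph n G (p + q) (B_graph p q)"
    using assms(1) by (auto simp: extremal_family_def admissible_def)
  have "card (common_nbrs_in G {..<n} K) \<le> q - 1" if "K \<subseteq> {..<n}" "clique G K" "card K = p" for K
    using B_free_common_nbrs_less[OF G that] by linarith
  then obtain V where V: "vertex_partition n p V"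
    and bound: "real p * real (adj_count G {..<n} {..<n} + (\<Sum>i\<in>{1..p}. adj_count G (V i) (V i)))
        \<le> (real p - 1) * real n ^ 2 + 2 * real p * real (q - 1) * real n"
    using furedi_partition[OF simple_graph_loop_free[OF G(1)], of p "{..<n}" "q - 1"] assms(2)
    by (auto simp: vertex_partition_iff)
  define E where "E = real (\<Sum>i\<in>{1..p}. edges_in G (V i))"
  have "adj_count G {..<n} {..<n} + (\<Sum>i\<in>{1..p}. adj_count G (V i) (V i))
      = 2 * card G + 2 * (\<Sum>i\<in>{1..p}. edges_in G (V i))"
    using adj_count_self[OF G(1)] edges_in_vertex_set[OF G(1)] vertex_partition_finite[OF V]
    by (simp add: sum_distrib_left)
  then have eq: "real (adj_count G {..<n} {..<n} + (\<Sum>i\<in>{1..p}. adj_count G (V i) (V i)))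
      = 2 * real (card G) + 2 * E"
    unfolding E_def by simp
  have "real p * (2 * real (card G)) + real p * (2 * E)
      \<le> (real p - 1) * real n ^ 2 + 2 * real p * (real q - 1) * real n"
    using bound assms(3) unfolding eq by (simp add: of_nat_diff distrib_left)
  moreover have "(real p - 1) * real n ^ 2 - 11 * real p * real n \<le> real p * (2 * real (card G))"
  proof -
    have "real p * ((1 - 1 / real p) * real n ^ 2 - 11 * real n) = (real p - 1) * real n ^ 2 - 11 * real p * real n"
      using assms(2) by (simp add: field_simps)
    then show ?thesis using mult_left_mono[OF extremal_card_ge[OF assms], of "real p"] by simp
  qed
  ultimately have "real p * (2 * E) \<le> real p * (2 * ((real q + 9 / 2) * real n))"
    by (simp add: algebra_simps)
  then have "E \<le> (real q + 9 / 2) * real n" using assms(2) by simp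
  also have "\<dots> \<le> (real q + 5) * real n" by (intro mult_right_mono) auto
  finally have "E \<le> (real q + 5) * real n" .
  with V show ?thesis unfolding E_def by blast
qed

lemma extremal_partition_balanced:
  assumes "G \<in> extremal_family n p q" "p \<ge> 3" "q \<ge> 1" "2 * p \<le> n"
    and V: "vertex_partition n p V" "real (\<Sum>i\<in>{1..p}. edges_in G (V i)) \<le> \<eta> ^ 3 * real n ^ 2"
    and \<eta>: "0 < \<eta>" "\<eta> < 1 / 7" "22 / \<eta> ^ 2 \<le> real n"
    and "k \<in> {1..p}"
  shows "\<bar>real (card (V k)) - real n / real p\<bar> \<le> \<eta> * real n"
proof -
  have G: "simple_graph n G" using assms(1) by (simp add: extremal_family_def admissible_def)
  have sum_card: "(\<Sum>i\<in>{1..p}. real (card (V i))) = real n"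
    using vertex_partition_sum_card[OF V(1)] by (simp flip: of_nat_sum)
  have "(real (card (V k)) - real n / real p) ^ 2 \<le> (\<Sum>i\<in>{1..p}. real (card (V i)) ^ 2) - real n ^ 2 / real p"
    using sum_squares_ge_deviation[of "{1..p}" k "\<lambda>i. real (card (V i))"] \<open>k \<in> {1..p}\<close>
    unfolding sum_card by simp
  also have "\<dots> \<le> 2 * \<eta> ^ 3 * real n ^ 2 + 11 * real n"
    using card_edges_le_partition[OF G V(1)] extremal_card_ge[OF assms(1-4)] V(2)
    by (simp add: algebra_simps diff_divide_distrib)
  also have "\<dots> \<le> (\<eta> * real n) ^ 2"
  proof -
    have "\<eta> * (\<eta> * real n) ^ 2 \<le> 1 / 7 * (\<eta> * real n) ^ 2"
      using \<eta>(2) by (intro mult_right_mono) auto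
    moreover have "\<eta> ^ 3 * real n ^ 2 = \<eta> * (\<eta> * real n) ^ 2"
      by (simp add: power2_eq_square power3_eq_cube)
    ultimately have "2 * \<eta> ^ 3 * real n ^ 2 \<le> 2 / 7 * (\<eta> * real n) ^ 2" by linarith
    moreover have "22 \<le> \<eta> ^ 2 * real n" using \<eta>(1,3) by (simp add: field_simps)
    then have "22 * real n \<le> (\<eta> * real n) ^ 2"
      using mult_right_mono[of 22 "\<eta> ^ 2 * real n" "real n"] by (simp add: power2_eq_square mult_ac)
    ultimately show ?thesis by linarith
  qed
  finally show ?thesis using \<eta>(1) by (simp add: power2_le_iff_abs_le)
qed

theorem lemma3p1:
  fixes p q :: nat and \<eta> :: real
  assumes "p \<ge> 3" and "q \<ge> 1" and "0 < \<eta>" and "\<eta> < 1 / (7 * real p ^ 5 * real q)"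
  shows "\<exists>N. \<forall>n \<ge> N. \<forall>G. G \<in> extremal_family n p q \<and>
           min_degree n G = Min (min_degree n ` extremal_family n p q) \<longrightarrow>
         (\<exists>V. vertex_partition n p V \<and>
              real (\<Sum>i\<in>{1..p}. edges_in G (V i)) \<le> \<eta> ^ 3 * real n ^ 2) \<and>
         (\<forall>V. vertex_partition n p V \<and>
              real (\<Sum>i\<in>{1..p}. edges_in G (V i)) \<le> \<eta> ^ 3 * real n ^ 2 \<longrightarrow>
              (\<forall>i\<in>{1..p}. \<bar>real (card (V i)) - real n / real p\<bar> \<le> \<eta> * real n))"
proof -
  have "1 * 1 \<le> real p ^ 5 * real q" using assms(1,2) by (intro mult_mono one_le_power) auto
  then have "1 / (7 * real p ^ 5 * real q) \<le> 1 / 7" by (intro divide_left_mono) auto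
  with assms(4) have \<eta>_small: "\<eta> < 1 / 7" by linarith
  define N where "N = 2 * p + nat \<lceil>(real q + 5) / \<eta> ^ 3 + 22 / \<eta> ^ 2\<rceil>"
  have large: "2 * p \<le> n" "(real q + 5) * real n \<le> \<eta> ^ 3 * real n ^ 2" "22 / \<eta> ^ 2 \<le> real n"
    if "N \<le> n" for n
  proof -
    have "0 \<le> (real q + 5) / \<eta> ^ 3" "0 \<le> 22 / \<eta> ^ 2" using assms(3) by auto
    with that have "2 * p \<le> n" "22 / \<eta> ^ 2 \<le> real n" "(real q + 5) / \<eta> ^ 3 \<le> real n"
      unfolding N_def by linarith+
    then show "2 * p \<le> n" "22 / \<eta> ^ 2 \<le> real n" by simp_all
    have "real q + 5 \<le> \<eta> ^ 3 * real n"
      using \<open>(real q + 5) / \<eta> ^ 3 \<le> real n\<close> assms(3) by (simp add: pos_divide_le_eq mult.commute)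
    then show "(real q + 5) * real n \<le> \<eta> ^ 3 * real n ^ 2"
      using mult_right_mono[of "real q + 5" "\<eta> ^ 3 * real n" "real n"] by (simp add: power2_eq_square)
  qed
  show ?thesis
  proof (intro exI[of _ N] allI impI conjI ballI)
    fix n G assume n: "N \<le> n" and "G \<in> extremal_family n p q \<and>
      min_degree n G = Min (min_degree n ` extremal_family n p q)"
    then have G: "G \<in> extremal_family n p q" by blast
    show "\<exists>V. vertex_partition n p V \<and> real (\<Sum>i\<in>{1..p}. edges_in G (V i)) \<le> \<eta> ^ 3 * real n ^ 2"
      using extremal_sparse_partition[OF G assms(1,2) large(1)[OF n]] large(2)[OF n] by (meson order_trans)
    show "\<bar>real (card (V i)) - real n / real p\<bar> \<le> \<eta> * real n"
      if "vertex_partition n p V \<and> real (\<Sum>i\<in>{1..p}. edges_in G (V i)) \<le> \<eta> ^ 3 * real n ^ 2"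
        and "i \<in> {1..p}" for V i
      using extremal_partition_balanced[OF G assms(1,2) large(1)[OF n] _ _ assms(3) \<eta>_small large(3)[OF n]]
        that by blast
  qed
qed

end
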